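(* Let $\mathcal{Y}$ be a family of metric spaces with uniform asymptotic property C. If $\mathcal{X}$ is a family of metric spaces such that $\mathcal{X}$ is uniformly $R$-decomposable over $\mathcal{Y}$ for every sequence $R\in\mathbb{R}^{\mathbb{N}}$ (with the same $\mathcal{Y}$ for all $R$), then $\mathcal{X}$ has uniform asymptotic property C.
   Context: A family $\mathcal{U}$ of metric subspaces of a metric space $(X,d)$ is $r$-disjoint if $d(x,y)>r$ whenever $x\in U$, $y\in U'$ and $U\neq U'$ are elements of $\mathcal{U}$. For families $\mathcal{X},\mathcal{Y}$ of metric spaces and $R=(R_1,R_2,\dots)\in\mathbb{R}^{\mathbb{N}}$, $\mathcal{X}$ is uniformly $R$-decomposable over $\mathcal{Y}$ (written $\mathcal{X}\xrightarrow{R}\mathcal{Y}$) if there is an integer $k$ such that for each $X\in\mathcal{X}$ there exist subcollections $\mathcal{U}_1,\dots,\mathcal{U}_k\subseteq\mathcal{Y}$, consisting of subspaces of $X$ with the induced metric, such that each $\mathcal{U}_i$ is $R_i$-disjoint and $\bigcup_i\mathcal{U}_i$ covers $X$. A family $\mathcal{B}$ of metric spaces is bounded if there is $D>0$ with $\operatorname{diam}(B)<D$ for all $B\in\mathcal{B}$. A family $\mathcal{X}$ has uniform asymptotic property C if for each $R\in\mathbb{R}^{\mathbb{N}}$ there exists a bounded family $\mathcal{Y}_R$ with $\mathcal{X}\xrightarrow{R}\mathcal{Y}_R$. *)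

theory Defs
  imports "HOL-Analysis.Analysis"
begin

text \<open>Metric spaces are represented as values of type 'a metric (HOL-Analysis,
Abstract_Metric_Spaces) over a common ambient carrier type 'a; a family of
metric spaces is a set of such values.\<close>

text \<open>Diameter of a metric space, valued in the extended reals (so that it is
always defined; it is +infinity for unbounded spaces, -infinity for the empty one).\<close>
definition mdiam :: "'a metric \<Rightarrow> ereal" where
  "mdiam B = (SUP x\<in>mspace B. SUP y\<in>mspace B. ereal (mdist B x y))"

definition r_disjoint :: "'a metric \<Rightarrow> real \<Rightarrow> 'a metric set \<Rightarrow> bool" where
  "r_disjoint X r \<U> \<longleftrightarrow>
     (\<forall>U\<in>\<U>. \<forall>U'\<in>\<U>. U \<noteq> U' \<longrightarrow>
        (\<forall>x\<in>mspace U. \<forall>y\<in>mspace U'. mdist X x y > r))"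

text \<open>Uniform R-decomposability of the family XX over the family YY
(R = (R_1, R_2, ...), the value R 0 is not used).\<close>
definition unif_decomposable :: "'a metric set \<Rightarrow> (nat \<Rightarrow> real) \<Rightarrow> 'a metric set \<Rightarrow> bool" where
  "unif_decomposable XX R YY \<longleftrightarrow>
     (\<exists>k::nat. \<forall>X\<in>XX. \<exists>\<U>::nat \<Rightarrow> 'a metric set.
        (\<forall>i\<in>{1..k}. \<U> i \<subseteq> YY \<and>
                    (\<forall>U\<in>\<U> i. U = submetric X (mspace U)) \<and>
                    r_disjoint X (R i) (\<U> i)) \<and>
        mspace X \<subseteq> (\<Union>i\<in>{1..k}. \<Union>U\<in>\<U> i. mspace U))"

definition bounded_family :: "'a metric set \<Rightarrow> bool" where
  "bounded_family BB \<longleftrightarrow> (\<exists>D>0. \<forall>B\<in>BB. mdiam B < ereal D)"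

definition unif_asymp_property_C :: "'a metric set \<Rightarrow> bool" where
  "unif_asymp_property_C XX \<longleftrightarrow>
     (\<forall>R::nat \<Rightarrow> real. \<exists>YY. bounded_family YY \<and> unif_decomposable XX R YY)"

end

theory Submission
  imports Defs
begin

text \<open>Given R, decompose each X \<in> XX over YY with disjointness constants T 1, ..., T k
growing fast enough, and then decompose each piece U in the i-th colour over a bounded
family with its own block of colours (N (i-1), N i]. Two points of the same refined
colour lie either in the same U, where the refined disjointness applies, or in different
pieces of the same coarse colour, which are T i apart, and T i dominates R on the whole
block. Since N depends only on R and on the number of colours the decompositions of YY
need, T can be chosen before k, and the union of the k bounded families used is bounded.\<close>

definition is_decomposition ::
    "'a metric \<Rightarrow> (nat \<Rightarrow> real) \<Rightarrow> 'a metric set \<Rightarrow> nat \<Rightarrow> (nat \<Rightarrow> 'a metric set) \<Rightarrow> bool" where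
  "is_decomposition X R YY k \<U> \<longleftrightarrow>
     (\<forall>i\<in>{1..k}. \<U> i \<subseteq> YY \<and> (\<forall>U\<in>\<U> i. U = submetric X (mspace U)) \<and>
                 r_disjoint X (R i) (\<U> i)) \<and>
     mspace X \<subseteq> (\<Union>i\<in>{1..k}. \<Union>U\<in>\<U> i. mspace U)"

lemma unif_decomposable_iff:
  "unif_decomposable XX R YY \<longleftrightarrow> (\<exists>k. \<forall>X\<in>XX. \<exists>\<U>. is_decomposition X R YY k \<U>)"
  unfolding unif_decomposable_def is_decomposition_def ..

lemma unif_decomposable_choice:
  assumes "unif_decomposable XX R YY"
  shows "\<exists>k \<U>. \<forall>X\<in>XX. is_decomposition X R YY k (\<U> X)"
  using assms unfolding unif_decomposable_iff by (metis bchoice)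

lemma unif_asymp_property_C_choice:
  assumes "unif_asymp_property_C YY"
  shows "\<exists>BB m \<V>. \<forall>S. bounded_family (BB S) \<and>
           (\<forall>Y\<in>YY. is_decomposition Y S (BB S) (m S) (\<V> S Y))"
proof -
  have "\<forall>S. \<exists>B n \<V>. bounded_family B \<and> (\<forall>Y\<in>YY. is_decomposition Y S B n (\<V> Y))"
    using assms unif_decomposable_choice unfolding unif_asymp_property_C_def by blast
  then show ?thesis
    by metis
qed

lemma submetric_trans:
  assumes "V = submetric U (mspace V)" "U = submetric X (mspace U)"
  shows "V = submetric X (mspace V)" "mspace V \<subseteq> mspace U"
proof -
  have "mspace V = mspace V \<inter> mspace U"
    by (metis assms(1) mspace_submetric)
  then show "V = submetric X (mspace V)"
    by (metis assms inf_commute submetric_submetric)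
  show "mspace V \<subseteq> mspace U"
    by (metis assms(1) inf.cobounded2 mspace_submetric)
qed

lemma bounded_family_Un:
  assumes "bounded_family AA" "bounded_family BB"
  shows "bounded_family (AA \<union> BB)"
proof -
  obtain D E where "D > 0" "\<forall>A\<in>AA. mdiam A < ereal D" "E > 0" "\<forall>B\<in>BB. mdiam B < ereal E"
    using assms unfolding bounded_family_def by blast
  then have "\<forall>B\<in>AA \<union> BB. mdiam B < ereal (max D E)"
    by (auto intro: less_le_trans)
  with \<open>D > 0\<close> show ?thesis
    unfolding bounded_family_def by (intro exI[of _ "max D E"]) auto
qed

lemma bounded_family_UN:
  assumes "finite I" "\<And>i. i \<in> I \<Longrightarrow> bounded_family (BB i)"
  shows "bounded_family (\<Union>i\<in>I. BB i)"
  using assms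
proof (induction I rule: finite_induct)
  case empty
  show ?case unfolding bounded_family_def by (intro exI[of _ 1]) auto
next
  case (insert i I)
  then show ?case by (simp add: bounded_family_Un)
qed

lemma block_index_unique:
  fixes N :: "nat \<Rightarrow> nat"
  assumes "mono N"
    and "N i < n" "n \<le> N (Suc i)" "N i' < n" "n \<le> N (Suc i')"
  shows "i = i'"
proof (rule ccontr)
  assume "i \<noteq> i'"
  then have "Suc i \<le> i' \<or> Suc i' \<le> i"
    by linarith
  then have "N (Suc i) \<le> N i' \<or> N (Suc i') \<le> N i"
    using monoD[OF \<open>mono N\<close>] by blast
  with assms(2-5) show False by linarith
qed

definition refined_decomposition ::
    "(nat \<Rightarrow> nat) \<Rightarrow> (nat \<Rightarrow> nat) \<Rightarrow> nat \<Rightarrow> (nat \<Rightarrow> 'a metric set) \<Rightarrow>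
     (nat \<Rightarrow> 'a metric \<Rightarrow> nat \<Rightarrow> 'a metric set) \<Rightarrow> nat \<Rightarrow> 'a metric set" where
  "refined_decomposition N m k \<U> \<V> n =
     {V. \<exists>i<k. \<exists>j\<in>{1..m i}. n = N i + j \<and> (\<exists>U\<in>\<U> (Suc i). V \<in> \<V> i U j)}"

context
  fixes X :: "'a metric" and T R :: "nat \<Rightarrow> real" and YY :: "'a metric set"
    and k :: nat and \<U> :: "nat \<Rightarrow> 'a metric set"
    and N m :: "nat \<Rightarrow> nat" and BB :: "nat \<Rightarrow> 'a metric set"
    and \<V> :: "nat \<Rightarrow> 'a metric \<Rightarrow> nat \<Rightarrow> 'a metric set"
  assumes coarse: "is_decomposition X T YY k \<U>"
    and fine: "\<And>i U. i < k \<Longrightarrow> U \<in> \<U> (Suc i) \<Longrightarrow>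
                 is_decomposition U (\<lambda>j. R (N i + j)) (BB i) (m i) (\<V> i U)"
    and N_Suc: "\<And>i. N (Suc i) = N i + m i"
    and T_dominates: "\<And>i n. i < k \<Longrightarrow> n \<le> N (Suc i) \<Longrightarrow> R n \<le> T (Suc i)"
begin

private lemma mono_N: "mono N"
  using N_Suc by (intro mono_iff_le_Suc[THEN iffD2]) simp

private lemma coarse_submetric: "i < k \<Longrightarrow> U \<in> \<U> (Suc i) \<Longrightarrow> U = submetric X (mspace U)"
  using coarse unfolding is_decomposition_def by auto

private lemma fine_props:
  assumes "i < k" "U \<in> \<U> (Suc i)" "j \<in> {1..m i}"
  shows "\<V> i U j \<subseteq> BB i" "\<forall>V\<in>\<V> i U j. V = submetric U (mspace V)"
    "r_disjoint U (R (N i + j)) (\<V> i U j)"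
  using fine[OF assms(1,2)] assms(3) unfolding is_decomposition_def by auto

private lemma refined_decomposition_disjoint:
  "r_disjoint X (R n) (refined_decomposition N m k \<U> \<V> n)"
  unfolding r_disjoint_def
proof (intro ballI impI)
  fix V V' x y
  assume "V \<in> refined_decomposition N m k \<U> \<V> n" "V' \<in> refined_decomposition N m k \<U> \<V> n"
    and "V \<noteq> V'" "x \<in> mspace V" "y \<in> mspace V'"
  then obtain i j U i' j' U' where ij: "i < k" "j \<in> {1..m i}" "n = N i + j" "U \<in> \<U> (Suc i)"
      "V \<in> \<V> i U j" and ij': "i' < k" "j' \<in> {1..m i'}" "n = N i' + j'" "U' \<in> \<U> (Suc i')"
      "V' \<in> \<V> i' U' j'"
    unfolding refined_decomposition_def by blast
  have "i' = i"
    using block_index_unique[OF mono_N, of i n i'] ij(2,3) ij'(2,3) N_Suc by force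
  with ij ij' have same: "i' = i" "j' = j" by auto
  show "R n < mdist X x y"
  proof (cases "U = U'")
    case True
    then have "R n < mdist U x y"
      using fine_props(3)[OF ij(1,4,2)] ij ij' same \<open>V \<noteq> V'\<close> \<open>x \<in> mspace V\<close> \<open>y \<in> mspace V'\<close>
      unfolding r_disjoint_def by blast
    then show ?thesis
      by (metis coarse_submetric[OF ij(1,4)] mdist_submetric)
  next
    case False
    have "x \<in> mspace U" "y \<in> mspace U'"
      using submetric_trans(2) fine_props(2) coarse_submetric ij ij' same
        \<open>x \<in> mspace V\<close> \<open>y \<in> mspace V'\<close>
      by blast+
    with False ij ij' same coarse have "T (Suc i) < mdist X x y"
      unfolding is_decomposition_def r_disjoint_def by fastforce
    moreover have "R n \<le> T (Suc i)"
      using T_dominates[OF ij(1)] ij(2,3) N_Suc by simp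
    ultimately show ?thesis by linarith
  qed
qed

private lemma refined_decomposition_cover:
  "mspace X \<subseteq> (\<Union>n\<in>{1..N k}. \<Union>V\<in>refined_decomposition N m k \<U> \<V> n. mspace V)"
proof
  fix x assume "x \<in> mspace X"
  then obtain i U where "i \<in> {1..k}" "U \<in> \<U> i" "x \<in> mspace U"
    using coarse unfolding is_decomposition_def by blast
  then obtain i0 where i0: "i = Suc i0" "i0 < k" "U \<in> \<U> (Suc i0)" "x \<in> mspace U"
    by (cases i) auto
  then obtain j V where jV: "j \<in> {1..m i0}" "V \<in> \<V> i0 U j" "x \<in> mspace V"
    using fine[OF i0(2,3)] unfolding is_decomposition_def by blast
  have "V \<in> refined_decomposition N m k \<U> \<V> (N i0 + j)"
    unfolding refined_decomposition_def using i0 jV by blast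
  moreover have "N i0 + j \<le> N k"
    using jV N_Suc[of i0] monoD[OF mono_N, of "Suc i0" k] i0(2) by simp
  ultimately show "x \<in> (\<Union>n\<in>{1..N k}. \<Union>V\<in>refined_decomposition N m k \<U> \<V> n. mspace V)"
    using jV by force
qed

lemma is_decomposition_refined:
  "is_decomposition X R (\<Union>i<k. BB i) (N k) (refined_decomposition N m k \<U> \<V>)"
proof -
  have "refined_decomposition N m k \<U> \<V> n \<subseteq> (\<Union>i<k. BB i)" for n
    using fine_props(1) unfolding refined_decomposition_def by blast
  moreover have "V = submetric X (mspace V)" if "V \<in> refined_decomposition N m k \<U> \<V> n" for V n
    using that fine_props(2) coarse_submetric submetric_trans(1)
    unfolding refined_decomposition_def by blast
  ultimately show ?thesis
    unfolding is_decomposition_def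
    using refined_decomposition_disjoint refined_decomposition_cover by simp
qed

end

fun block_start :: "((nat \<Rightarrow> real) \<Rightarrow> nat) \<Rightarrow> (nat \<Rightarrow> real) \<Rightarrow> nat \<Rightarrow> nat" where
  "block_start m R 0 = 0"
| "block_start m R (Suc i) = block_start m R i + m (\<lambda>j. R (block_start m R i + j))"

theorem theorem1p5:
  fixes XX YY :: "'a metric set"
  assumes "unif_asymp_property_C YY"
    and "\<forall>R::nat \<Rightarrow> real. unif_decomposable XX R YY"
  shows "unif_asymp_property_C XX"
  unfolding unif_asymp_property_C_def
proof
  fix R :: "nat \<Rightarrow> real"
  obtain BB m \<V> where BB: "\<And>S. bounded_family (BB S)"
    and \<V>: "\<And>S Y. Y \<in> YY \<Longrightarrow> is_decomposition Y S (BB S) (m S) (\<V> S Y)"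
    using unif_asymp_property_C_choice[OF assms(1)] by blast
  define N where "N = block_start m R"
  define T where "T i = Max (insert 0 (R ` {..N i}))" for i
  obtain k \<U> where \<U>: "\<And>X. X \<in> XX \<Longrightarrow> is_decomposition X T YY k (\<U> X)"
    using unif_decomposable_choice assms(2) by blast
  have "is_decomposition X R (\<Union>i<k. BB (\<lambda>j. R (N i + j))) (N k)
          (refined_decomposition N (\<lambda>i. m (\<lambda>j. R (N i + j))) k (\<U> X) (\<lambda>i. \<V> (\<lambda>j. R (N i + j))))"
    if "X \<in> XX" for X
  proof (rule is_decomposition_refined[OF \<U>[OF that]])
    fix i U assume "i < k" "U \<in> \<U> X (Suc i)"
    then have "U \<in> YY"
      using \<U>[OF that] unfolding is_decomposition_def by auto
    then show "is_decomposition U (\<lambda>j. R (N i + j)) (BB (\<lambda>j. R (N i + j)))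
                 (m (\<lambda>j. R (N i + j))) (\<V> (\<lambda>j. R (N i + j)) U)"
      by (rule \<V>)
  next
    fix i n assume "n \<le> N (Suc i)"
    then show "R n \<le> T (Suc i)"
      unfolding T_def by (intro Max_ge) auto
  qed (simp add: N_def)
  moreover have "bounded_family (\<Union>i<k. BB (\<lambda>j. R (N i + j)))"
    by (simp add: BB bounded_family_UN)
  ultimately show "\<exists>ZZ. bounded_family ZZ \<and> unif_decomposable XX R ZZ"
    unfolding unif_decomposable_iff by blast
qed

end
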